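(* Let $E$ be a classification instance with feature set $F$ containing at least one positive and at least one negative example. Then $|E|\le 2\binom{|F|}{\delta_{\max}}D_{\max}^{\delta_{\max}}$.
   Context: A classification instance (CI) $E=E^+\cup E^-$ is a finite set (no repetitions) of examples $e:F\to\mathbb{Z}$ over a common feature set $F$, partitioned into positive examples $E^+$ and negative examples $E^-$. For examples $e,e'$, $\lambda(e,e')$ is the set of features on which they differ; $\delta_{\max}=\max_{e^+\in E^+,e^-\in E^-}|\lambda(e^+,e^-)|$. $D_{\max}=\max_{f\in F}|\{e(f):e\in E\}|$. *)

theory Defs
  imports "HOL-Library.FuncSet"
begin

definition is_CI :: "'f set \<Rightarrow> ('f \<Rightarrow> int) set \<Rightarrow> ('f \<Rightarrow> int) set \<Rightarrow> bool" where
  "is_CI F Ep En \<longleftrightarrow> finite F \<and> finite (Ep \<union> En) \<and> Ep \<inter> En = {}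
     \<and> Ep \<union> En \<subseteq> extensional F"

definition lam :: "'f set \<Rightarrow> ('f \<Rightarrow> int) \<Rightarrow> ('f \<Rightarrow> int) \<Rightarrow> 'f set" where
  "lam F e e' = {f \<in> F. e f \<noteq> e' f}"

definition delta_max :: "'f set \<Rightarrow> ('f \<Rightarrow> int) set \<Rightarrow> ('f \<Rightarrow> int) set \<Rightarrow> nat" where
  "delta_max F Ep En = Max {card (lam F ep en) | ep en. ep \<in> Ep \<and> en \<in> En}"

definition D_max :: "'f set \<Rightarrow> ('f \<Rightarrow> int) set \<Rightarrow> nat" where
  "D_max F E = Max ((\<lambda>f. card ((\<lambda>e. e f) ` E)) ` F)"

end

theory Submission
  imports Defs
begin

text \<open>Fix a negative example \<open>e\<^sub>0\<close>. Every positive example \<open>e\<close> differs from \<open>e\<^sub>0\<close>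
  on at most \<open>\<delta>\<^sub>m\<^sub>a\<^sub>x\<close> features, so \<open>e\<close> is determined by a \<open>\<delta>\<^sub>m\<^sub>a\<^sub>x\<close>-subset \<open>S\<close> of \<open>F\<close>
  containing \<open>\<lambda>(e\<^sub>0, e)\<close> together with the values of \<open>e\<close> on \<open>S\<close>; there are at most
  \<open>C(|F|, \<delta>\<^sub>m\<^sub>a\<^sub>x) D\<^sub>m\<^sub>a\<^sub>x^\<delta>\<^sub>m\<^sub>a\<^sub>x\<close> such pairs. Symmetrically for the negative examples.\<close>

lemma lam_commute: "lam F e e' = lam F e' e"
  unfolding lam_def by auto

lemma lam_subset: "lam F e e' \<subseteq> F"
  unfolding lam_def by auto

lemma restrict_eq_imp_eq_if_lam_subset:
  assumes "e \<in> extensional F" and "e' \<in> extensional F"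
    and "lam F e\<^sub>0 e \<subseteq> S" and "lam F e\<^sub>0 e' \<subseteq> S"
    and "restrict e S = restrict e' S"
  shows "e = e'"
proof (rule extensionalityI[OF assms(1,2)])
  fix f assume "f \<in> F"
  show "e f = e' f"
  proof (cases "f \<in> S")
    case True
    then show ?thesis using assms(5) by (metis restrict_apply')
  next
    case False
    then have "e f = e\<^sub>0 f" and "e' f = e\<^sub>0 f"
      using \<open>f \<in> F\<close> assms(3,4) unfolding lam_def by auto
    then show ?thesis by simp
  qed
qed

lemma card_Sigma_subsets_PiE_le:
  assumes "finite F"
    and "\<And>f. f \<in> F \<Longrightarrow> finite (V f)" and "\<And>f. f \<in> F \<Longrightarrow> card (V f) \<le> D"
  shows "card (SIGMA S:{S. S \<subseteq> F \<and> card S = d}. PiE S V) \<le> (card F choose d) * D ^ d"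
proof -
  let ?SS = "{S. S \<subseteq> F \<and> card S = d}"
  have finite_SS: "finite ?SS" using assms(1) by simp
  have finite_PiE_S: "finite (PiE S V)" if "S \<in> ?SS" for S
    using that assms(1,2) by (intro finite_PiE) (auto dest: finite_subset)
  have card_PiE_le: "card (PiE S V) \<le> D ^ d" if "S \<in> ?SS" for S
  proof -
    have "finite S" using that assms(1) finite_subset by blast
    then have "card (PiE S V) = (\<Prod>f\<in>S. card (V f))" by (rule card_PiE)
    also have "\<dots> \<le> (\<Prod>f\<in>S. D)" using that assms(3) by (intro prod_mono) auto
    also have "\<dots> = D ^ d" using that by simp
    finally show ?thesis .
  qed
  have "card (SIGMA S:?SS. PiE S V) = (\<Sum>S\<in>?SS. card (PiE S V))"
    using finite_SS finite_PiE_S by (rule card_SigmaI[rule_format])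
  also have "\<dots> \<le> (\<Sum>S\<in>?SS. D ^ d)" using card_PiE_le by (rule sum_mono)
  also have "\<dots> = card ?SS * D ^ d" by simp
  also have "card ?SS = card F choose d" using n_subsets[OF assms(1)] .
  finally show ?thesis .
qed

lemma card_hamming_ball_le:
  assumes "finite F" and "finite A" and "A \<subseteq> extensional F"
    and close: "\<And>e. e \<in> A \<Longrightarrow> card (lam F e\<^sub>0 e) \<le> d" and "d \<le> card F"
    and values_le: "\<And>f. f \<in> F \<Longrightarrow> card ((\<lambda>e. e f) ` A) \<le> D"
  shows "card A \<le> (card F choose d) * D ^ d"
proof -
  let ?T = "SIGMA S:{S. S \<subseteq> F \<and> card S = d}. PiE S (\<lambda>f. (\<lambda>e. e f) ` A)"
  have "\<exists>S. lam F e\<^sub>0 e \<subseteq> S \<and> S \<subseteq> F \<and> card S = d" if "e \<in> A" for e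
    using exists_subset_between[OF close[OF that] \<open>d \<le> card F\<close> lam_subset \<open>finite F\<close>] .
  then obtain S where S: "\<And>e. e \<in> A \<Longrightarrow> lam F e\<^sub>0 e \<subseteq> S e \<and> S e \<subseteq> F \<and> card (S e) = d"
    by metis
  define code where "code e = (S e, restrict e (S e))" for e
  have "inj_on code A"
  proof (rule inj_onI)
    fix e e' assume "e \<in> A" "e' \<in> A" "code e = code e'"
    then have "S e = S e'" and "restrict e (S e) = restrict e' (S e)"
      unfolding code_def by auto
    then show "e = e'"
      using S[OF \<open>e \<in> A\<close>] S[OF \<open>e' \<in> A\<close>] \<open>e \<in> A\<close> \<open>e' \<in> A\<close> assms(3)
      by (intro restrict_eq_imp_eq_if_lam_subset[of e F e' e\<^sub>0 "S e"]) auto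
  qed
  moreover have "code ` A \<subseteq> ?T" using S unfolding code_def by auto
  moreover have "finite ?T"
    using assms(1,2) by (intro finite_SigmaI finite_PiE) (auto intro: finite_subset)
  ultimately have "card A \<le> card ?T" by (rule card_inj_on_le)
  also have "\<dots> \<le> (card F choose d) * D ^ d"
    using assms(1,2) values_le by (intro card_Sigma_subsets_PiE_le) auto
  finally show ?thesis .
qed

lemma finite_card_lam_pairs:
  assumes "finite Ep" and "finite En"
  shows "finite {card (lam F ep en) | ep en. ep \<in> Ep \<and> en \<in> En}"
proof -
  have "{card (lam F ep en) | ep en. ep \<in> Ep \<and> en \<in> En} = (\<lambda>(a, b). card (lam F a b)) ` (Ep \<times> En)"
    by auto
  then show ?thesis using assms by simp
qed

lemma card_lam_le_delta_max:
  assumes "finite Ep" and "finite En" and "ep \<in> Ep" and "en \<in> En"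
  shows "card (lam F ep en) \<le> delta_max F Ep En"
  unfolding delta_max_def using finite_card_lam_pairs[OF assms(1,2)] assms(3,4)
  by (intro Max_ge) auto

lemma delta_max_le_card:
  assumes "finite F" and "finite Ep" and "finite En" and "Ep \<noteq> {}" and "En \<noteq> {}"
  shows "delta_max F Ep En \<le> card F"
proof -
  have "delta_max F Ep En \<in> {card (lam F ep en) | ep en. ep \<in> Ep \<and> en \<in> En}"
    unfolding delta_max_def using finite_card_lam_pairs[OF assms(2,3)] assms(4,5)
    by (intro Max_in) auto
  then show ?thesis using card_mono[OF assms(1) lam_subset] by auto
qed

lemma card_values_le_D_max:
  assumes "finite F" and "finite E" and "A \<subseteq> E" and "f \<in> F"
  shows "card ((\<lambda>e. e f) ` A) \<le> D_max F E"
proof -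
  have "card ((\<lambda>e. e f) ` A) \<le> card ((\<lambda>e. e f) ` E)"
    using assms(2,3) by (intro card_mono image_mono) auto
  also have "\<dots> \<le> D_max F E"
    unfolding D_max_def using assms(1,4) by (intro Max_ge) auto
  finally show ?thesis .
qed

theorem lemma8:
  fixes F :: "'f set" and Ep En :: "('f \<Rightarrow> int) set"
  assumes "is_CI F Ep En" and "Ep \<noteq> {}" and "En \<noteq> {}"
  shows "card (Ep \<union> En) \<le>
     2 * (card F choose delta_max F Ep En) * D_max F (Ep \<union> En) ^ delta_max F Ep En"
proof -
  define d where "d = delta_max F Ep En"
  define B where "B = (card F choose d) * D_max F (Ep \<union> En) ^ d"
  have CI: "finite F" "finite Ep" "finite En" "Ep \<subseteq> extensional F" "En \<subseteq> extensional F"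
    and finite_E: "finite (Ep \<union> En)"
    using assms(1) unfolding is_CI_def by auto
  have "d \<le> card F" unfolding d_def using CI(1-3) assms(2,3) by (rule delta_max_le_card)
  obtain ep en where "ep \<in> Ep" "en \<in> En" using assms(2,3) by blast
  have "card (lam F en e) \<le> d" if "e \<in> Ep" for e
    unfolding d_def lam_commute[of F en] using CI(2,3) that \<open>en \<in> En\<close>
    by (rule card_lam_le_delta_max)
  then have "card Ep \<le> B"
    unfolding B_def using card_hamming_ball_le[OF CI(1,2,4) _ \<open>d \<le> card F\<close>]
      card_values_le_D_max[OF CI(1) finite_E Un_upper1] by blast
  moreover have "card (lam F ep e) \<le> d" if "e \<in> En" for e
    unfolding d_def using CI(2,3) \<open>ep \<in> Ep\<close> that by (rule card_lam_le_delta_max)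
  then have "card En \<le> B"
    unfolding B_def using card_hamming_ball_le[OF CI(1,3,5) _ \<open>d \<le> card F\<close>]
      card_values_le_D_max[OF CI(1) finite_E Un_upper2] by blast
  ultimately have "card (Ep \<union> En) \<le> 2 * B"
    using card_Un_le[of Ep En] by linarith
  then show ?thesis unfolding B_def d_def by (simp only: mult.assoc)
qed

end
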